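(* Let $M,M'$ be positive integers, $L_1\ge2$, $L_2\ge1$, and let $\Gamma_{1,1},\dots,\Gamma_{1,L_1},\Gamma_{2,1},\dots,\Gamma_{2,L_2}$ be pairwise co-prime positive integers with $\Gamma_{1,1}=\dot\Gamma_{1,1}M'$ for some integer $\dot\Gamma_{1,1}$. Consider the moduli $M_i=M\Gamma_{1,i}$ for $1\le i\le L_1$ and $M_{L_1+i}=MM'\Gamma_{2,i}$ for $1\le i\le L_2$. Let $N$ be an integer with $0\le N<\operatorname{lcm}(M_1,\dots,M_{L_1+L_2})$, let $r_i$ be the remainder of $N$ modulo $M_i$, $n_i=(N-r_i)/M_i$, and let $\tilde r_i$ be integers with $0\le\tilde r_i\le M_i-1$ and $|\tilde r_i-r_i|\le\tau_i$, where $$\tau_1<M/4,\qquad \tau_i\le M/4\ (2\le i\le L_1),\qquad \tau_i\le MM'/2-M/4\ (L_1+1\le i\le L_1+L_2).$$ Then the single-stage algorithm (described in the context) run on $M_1,\dots,M_{L_1+L_2}$ with reference index $1$ and inputs $\tilde r_i$ outputs $\hat n_i=n_i$ for all $1\le i\le L_1+L_2$.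
   Context: For $x\in\mathbb R$, $[x]$ denotes the unique integer with $-1/2\le x-[x]<1/2$. Single-stage algorithm: let $P_1,\dots,P_m$ ($m\ge2$) be pairwise distinct positive integers, $k\in\{1,\dots,m\}$ a reference index, and $x_1,\dots,x_m$ integers. For each $i\ne k$ put $m_{ki}=\gcd(P_k,P_i)$, $\Gamma_{ki}=P_k/m_{ki}$, $\Gamma_{ik}=P_i/m_{ki}$, $\hat q_{ik}=[(x_i-x_k)/m_{ki}]$; let $\bar\Gamma_{ki}$ be a multiplicative inverse of $\Gamma_{ki}$ modulo $\Gamma_{ik}$, and let $\hat\xi_{ik}\in\{0,\dots,\Gamma_{ik}-1\}$ with $\hat\xi_{ik}\equiv\hat q_{ik}\bar\Gamma_{ki}\pmod{\Gamma_{ik}}$. Let $\hat n_k$ be the least nonnegative integer $y$ with $y\equiv\hat\xi_{ik}\pmod{\Gamma_{ik}}$ for all $i\ne k$ (if no such $y$ exists the algorithm fails). For $i\ne k$ set $\hat n_i=(\hat n_k\Gamma_{ki}-\hat q_{ik})/\Gamma_{ik}$. Outputs: $\hat n_1,\dots,\hat n_m$ and the estimate $[\frac1m\sum_{i=1}^m(\hat n_iP_i+x_i)]$. *)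

theory Defs
  imports "HOL-Number_Theory.Number_Theory"
begin

definition rnd :: "real \<Rightarrow> int" where
  "rnd x = (THE k::int. - 1/2 \<le> x - real_of_int k \<and> x - real_of_int k < 1/2)"

text \<open>Single-stage algorithm on moduli P 1..P m with reference index k and inputs x 1..x m.\<close>
definition single_stage ::
  "nat \<Rightarrow> (nat \<Rightarrow> int) \<Rightarrow> nat \<Rightarrow> (nat \<Rightarrow> int) \<Rightarrow> (nat \<Rightarrow> int) option" where
  "single_stage m P k x =
    (let mm = (\<lambda>i. gcd (P k) (P i));
         Gk = (\<lambda>i. P k div mm i);
         Gi = (\<lambda>i. P i div mm i);
         q = (\<lambda>i. rnd (real_of_int (x i - x k) / real_of_int (mm i)));
         Gbar = (\<lambda>i. SOME g::int. [Gk i * g = 1] (mod Gi i));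
         xi = (\<lambda>i. (q i * Gbar i) mod Gi i);
         S = {y::nat. \<forall>i\<in>{1..m} - {k}. [int y = xi i] (mod Gi i)};
         nk = Least (\<lambda>y. y \<in> S)
     in if S = {} then None
        else Some (\<lambda>i. if i = k then int nk else (int nk * Gk i - q i) div Gi i))"

end

theory Submission
  imports Defs
begin

text \<open>Write \<open>m = gcd P\<^sub>k P\<^sub>i\<close>, \<open>P\<^sub>k = m \<Gamma>\<^sub>k\<^sub>i\<close>, \<open>P\<^sub>i = m \<Gamma>\<^sub>i\<^sub>k\<close> and \<open>n\<^sub>i = N div P\<^sub>i\<close>.
  The exact remainders satisfy \<open>r\<^sub>i - r\<^sub>k = m (n\<^sub>k \<Gamma>\<^sub>k\<^sub>i - n\<^sub>i \<Gamma>\<^sub>i\<^sub>k)\<close>, so as long as the two input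
  errors add up to less than \<open>m/2\<close>, rounding \<open>(x\<^sub>i - x\<^sub>k)/m\<close> recovers \<open>n\<^sub>k \<Gamma>\<^sub>k\<^sub>i - n\<^sub>i \<Gamma>\<^sub>i\<^sub>k\<close>
  exactly. Modulo \<open>\<Gamma>\<^sub>i\<^sub>k\<close> this determines \<open>n\<^sub>k\<close>; since the \<open>\<Gamma>\<^sub>i\<^sub>k\<close> are pairwise coprime and
  \<open>N < lcm \<le> P\<^sub>k \<Prod> \<Gamma>\<^sub>i\<^sub>k\<close>, the least solution of the congruence system is \<open>n\<^sub>k\<close> itself, and
  then every \<open>n\<^sub>i\<close> follows. In the corollary the gcds with the reference modulus are \<open>M\<close> and
  \<open>M M'\<close>, which turns the bounds on \<open>\<tau>\<^sub>i\<close> into this error budget.\<close>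

lemma rnd_eqI:
  assumes "\<bar>x - real_of_int k\<bar> < 1/2"
  shows "rnd x = k"
  unfolding rnd_def
proof (rule the_equality)
  show "- 1/2 \<le> x - real_of_int k \<and> x - real_of_int k < 1/2"
    using assms by linarith
next
  fix j :: int
  assume "- 1/2 \<le> x - real_of_int j \<and> x - real_of_int j < 1/2"
  with assms have "\<bar>real_of_int j - real_of_int k\<bar> < 1" by linarith
  then show "j = k" by linarith
qed

lemma rnd_residue_difference:
  fixes a b N x y :: int
  defines "d \<equiv> gcd a b"
  assumes err: "\<bar>real_of_int (y - N mod b)\<bar> + \<bar>real_of_int (x - N mod a)\<bar> < real_of_int d / 2"
  shows "rnd (real_of_int (y - x) / real_of_int d) = N div a * (a div d) - N div b * (b div d)"
proof -
  define e where "e = (y - N mod b) - (x - N mod a)"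
  define c where "c = N div a * (a div d) - N div b * (b div d)"
  have d_pos: "real_of_int d > 0"
    using err by linarith
  have "d * (a div d) = a" "d * (b div d) = b"
    unfolding d_def by simp_all
  then have "d * c = N div a * a - N div b * b"
    unfolding c_def by (simp only: right_diff_distrib mult.left_commute[of d])
  then have "y - x = d * c + e"
    unfolding e_def using div_mult_mod_eq[of N a] div_mult_mod_eq[of N b] by linarith
  then have "real_of_int (y - x) / real_of_int d - real_of_int c = real_of_int e / real_of_int d"
    using d_pos by (simp add: field_simps)
  moreover have "\<bar>real_of_int e\<bar> < real_of_int d / 2"
    using err unfolding e_def by linarith
  then have "\<bar>real_of_int e\<bar> / real_of_int d < 1/2"
    using d_pos by (simp add: divide_less_eq)
  ultimately have "\<bar>real_of_int (y - x) / real_of_int d - real_of_int c\<bar> < 1/2"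
    using d_pos by (simp add: abs_divide)
  then show ?thesis
    unfolding c_def by (rule rnd_eqI)
qed

lemma dvd_mult_div_gcd: "b dvd a * (b div gcd a b)"
  for a b :: int
  by (metis dvd_triv_right gcd_dvd2 gcd_dvd1 dvd_div_mult mult.commute)

lemma div_gcd_pos: "0 < b \<Longrightarrow> 0 < b div gcd a b"
  for a b :: int
  by (simp add: pos_imp_zdiv_pos_iff zdvd_imp_le)

lemma Lcm_dvd_mult_prod_div_gcd:
  fixes P :: "'i \<Rightarrow> int"
  assumes "finite A"
  shows "Lcm (P ` A) dvd P k * (\<Prod>i\<in>A - {k}. P i div gcd (P k) (P i))"
proof (unfold Lcm_dvd_iff, intro ballI)
  fix p assume "p \<in> P ` A"
  then obtain i where "i \<in> A" "p = P i" by blast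
  show "p dvd P k * (\<Prod>i\<in>A - {k}. P i div gcd (P k) (P i))"
  proof (cases "i = k")
    case False
    then have "P i div gcd (P k) (P i) dvd (\<Prod>i\<in>A - {k}. P i div gcd (P k) (P i))"
      using \<open>i \<in> A\<close> assms by (intro dvd_prodI) auto
    then have "P k * (P i div gcd (P k) (P i)) dvd P k * (\<Prod>i\<in>A - {k}. P i div gcd (P k) (P i))"
      by (rule mult_dvd_mono[OF dvd_refl])
    with dvd_mult_div_gcd show ?thesis
      unfolding \<open>p = P i\<close> by (rule dvd_trans)
  qed (simp add: \<open>p = P i\<close>)
qed

lemma cong_mod_mult_inverse:
  fixes a a' b c d :: int
  assumes "[a * a' = 1] (mod b)"
  shows "[(c * a - d * b) * a' mod b = c] (mod b)"
proof -
  have "[(c * a - d * b) * a' mod b = c * (a * a') - b * (d * a')] (mod b)"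
    by (simp add: cong_def algebra_simps)
  also have "[c * (a * a') - b * (d * a') = c * (a * a')] (mod b)"
    by (simp add: cong_iff_dvd_diff)
  also have "[c * (a * a') = c * 1] (mod b)"
    using assms by (rule cong_scalar_left)
  finally show ?thesis by simp
qed

lemma Least_cong_solution_eq:
  fixes g r :: "'i \<Rightarrow> int" and n :: int
  assumes coprime: "\<forall>i\<in>I. \<forall>j\<in>I. i \<noteq> j \<longrightarrow> coprime (g i) (g j)"
    and "0 \<le> n" "n < prod g I"
    and sol: "\<forall>i\<in>I. [n = r i] (mod g i)"
  shows "(LEAST y::nat. \<forall>i\<in>I. [int y = r i] (mod g i)) = nat n"
proof -
  define y where "y = (LEAST y::nat. \<forall>i\<in>I. [int y = r i] (mod g i))"
  have nat_sol: "\<forall>i\<in>I. [int (nat n) = r i] (mod g i)"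
    using sol \<open>0 \<le> n\<close> by simp
  then have "y \<le> nat n"
    unfolding y_def by (rule Least_le)
  from nat_sol have y_sol: "\<forall>i\<in>I. [int y = r i] (mod g i)"
    unfolding y_def by (rule LeastI)
  have "\<forall>i\<in>I. [int y = n] (mod g i)"
  proof
    fix i assume "i \<in> I"
    with y_sol sol have "[int y = r i] (mod g i)" "[r i = n] (mod g i)"
      by (simp_all add: cong_sym_eq)
    then show "[int y = n] (mod g i)"
      by (rule cong_trans)
  qed
  then have "[int y = n] (mod prod g I)"
    using coprime by (rule cong_cong_prod_coprime)
  then have "int y = n"
    using \<open>y \<le> nat n\<close> \<open>0 \<le> n\<close> \<open>n < prod g I\<close> by (intro cong_less_imp_eq_int) auto
  then show ?thesis
    unfolding y_def by simp
qed

lemma single_stage_exact_rounding: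
  fixes m k :: nat and P x n :: "nat \<Rightarrow> int"
  defines "I \<equiv> {1..m} - {k}"
    and "\<Gamma> \<equiv> \<lambda>i. P i div gcd (P k) (P i)"
  assumes pos: "\<forall>i\<in>I. P i > 0"
    and coprime: "\<forall>i\<in>I. \<forall>j\<in>I. i \<noteq> j \<longrightarrow> coprime (\<Gamma> i) (\<Gamma> j)"
    and rnd: "\<forall>i\<in>I. rnd (real_of_int (x i - x k) / real_of_int (gcd (P k) (P i)))
                  = n k * (P k div gcd (P k) (P i)) - n i * \<Gamma> i"
    and "0 \<le> n k" "n k < prod \<Gamma> I"
  shows "\<exists>nh. single_stage m P k x = Some nh \<and> (\<forall>i\<in>{1..m}. nh i = n i)"
proof -
  define \<Gamma>' where "\<Gamma>' i = P k div gcd (P k) (P i)" for i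
  define q where "q i = rnd (real_of_int (x i - x k) / real_of_int (gcd (P k) (P i)))" for i
  define \<Gamma>'_inv where "\<Gamma>'_inv i = (SOME g::int. [\<Gamma>' i * g = 1] (mod \<Gamma> i))" for i
  define \<xi> where "\<xi> i = (q i * \<Gamma>'_inv i) mod \<Gamma> i" for i
  define S where "S = {y::nat. \<forall>i\<in>I. [int y = \<xi> i] (mod \<Gamma> i)}"
  have \<Gamma>_pos: "\<Gamma> i > 0" if "i \<in> I" for i
    using pos that unfolding \<Gamma>_def by (simp add: div_gcd_pos)
  have q: "q i = n k * \<Gamma>' i - n i * \<Gamma> i" if "i \<in> I" for i
    using rnd that unfolding q_def \<Gamma>'_def by blast
  have inverse: "[\<Gamma>' i * \<Gamma>'_inv i = 1] (mod \<Gamma> i)" if "i \<in> I" for i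
  proof -
    have "coprime (\<Gamma>' i) (\<Gamma> i)"
      using pos that unfolding \<Gamma>'_def \<Gamma>_def by (intro div_gcd_coprime) auto
    then have "\<exists>g. [\<Gamma>' i * g = 1] (mod \<Gamma> i)"
      by (rule cong_solve_coprime_int)
    then show ?thesis
      unfolding \<Gamma>'_inv_def by (rule someI_ex)
  qed
  have "\<forall>i\<in>I. [n k = \<xi> i] (mod \<Gamma> i)"
  proof
    fix i assume "i \<in> I"
    show "[n k = \<xi> i] (mod \<Gamma> i)"
      using cong_mod_mult_inverse[OF inverse[OF \<open>i \<in> I\<close>], of "n k" "n i"]
      unfolding \<xi>_def q[OF \<open>i \<in> I\<close>] by (simp add: cong_sym_eq)
  qed
  then have "nat (n k) \<in> S" and least: "(LEAST y. y \<in> S) = nat (n k)"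
    using coprime \<open>0 \<le> n k\<close> \<open>n k < prod \<Gamma> I\<close>
    unfolding S_def by (simp_all add: Least_cong_solution_eq)
  have "single_stage m P k x = (if S = {} then None
      else Some (\<lambda>i. if i = k then int (LEAST y. y \<in> S) else (int (LEAST y. y \<in> S) * \<Gamma>' i - q i) div \<Gamma> i))"
    unfolding single_stage_def Let_def I_def \<Gamma>_def \<Gamma>'_def q_def \<Gamma>'_inv_def \<xi>_def S_def
    by (rule refl)
  then have "single_stage m P k x
      = Some (\<lambda>i. if i = k then n k else (n k * \<Gamma>' i - q i) div \<Gamma> i)"
    using \<open>nat (n k) \<in> S\<close> least \<open>0 \<le> n k\<close> by auto
  moreover have "(n k * \<Gamma>' i - q i) div \<Gamma> i = n i" if "i \<in> I" for i
    using q[OF that] \<Gamma>_pos[OF that] by simp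
  ultimately show ?thesis
    unfolding I_def by auto
qed

theorem single_stage_recovers_quotients:
  fixes m k :: nat and P x :: "nat \<Rightarrow> int" and N :: int
  defines "I \<equiv> {1..m} - {k}"
  assumes "k \<in> {1..m}" and pos: "\<forall>i\<in>{1..m}. P i > 0"
    and coprime: "\<forall>i\<in>I. \<forall>j\<in>I. i \<noteq> j \<longrightarrow>
        coprime (P i div gcd (P k) (P i)) (P j div gcd (P k) (P j))"
    and "0 \<le> N" and N_less: "N < Lcm (P ` {1..m})"
    and err: "\<forall>i\<in>I. \<bar>real_of_int (x i - N mod P i)\<bar> + \<bar>real_of_int (x k - N mod P k)\<bar>
                 < real_of_int (gcd (P k) (P i)) / 2"
  shows "\<exists>nh. single_stage m P k x = Some nh \<and> (\<forall>i\<in>{1..m}. nh i = N div P i)"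
proof -
  define \<Gamma> where "\<Gamma> i = P i div gcd (P k) (P i)" for i
  have "P k > 0"
    using pos \<open>k \<in> {1..m}\<close> by blast
  have "prod \<Gamma> I > 0"
    using pos unfolding \<Gamma>_def I_def by (intro prod_pos) (simp add: div_gcd_pos)
  then have "Lcm (P ` {1..m}) \<le> P k * prod \<Gamma> I"
    using \<open>P k > 0\<close> Lcm_dvd_mult_prod_div_gcd[of "{1..m}" P k]
    unfolding \<Gamma>_def I_def by (intro zdvd_imp_le) simp_all
  with N_less have "P k * (N div P k) < P k * prod \<Gamma> I"
    using mult_div_mod_eq[of "P k" N] pos_mod_sign[OF \<open>P k > 0\<close>, of N] by linarith
  then have "N div P k < prod \<Gamma> I"
    using \<open>P k > 0\<close> by simp
  moreover have "0 \<le> N div P k"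
    using \<open>0 \<le> N\<close> \<open>P k > 0\<close> by (simp add: pos_imp_zdiv_nonneg_iff)
  moreover have "\<forall>i\<in>I. rnd (real_of_int (x i - x k) / real_of_int (gcd (P k) (P i)))
      = N div P k * (P k div gcd (P k) (P i)) - N div P i * \<Gamma> i"
    using err rnd_residue_difference unfolding \<Gamma>_def by blast
  ultimately show ?thesis
    using pos coprime unfolding I_def \<Gamma>_def by (intro single_stage_exact_rounding) simp_all
qed

locale two_group_moduli =
  fixes M M' :: int and L1 L2 :: nat and G1 G2 :: "nat \<Rightarrow> int" and Gdot :: int
    and Ms :: "nat \<Rightarrow> int"
  assumes M_pos: "M > 0" and M'_pos: "M' > 0" and L1_pos: "L1 \<ge> 1"
    and G1_pos: "\<forall>i\<in>{1..L1}. G1 i > 0" and G2_pos: "\<forall>i\<in>{1..L2}. G2 i > 0"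
    and G1_coprime: "\<forall>i\<in>{1..L1}. \<forall>j\<in>{1..L1}. i \<noteq> j \<longrightarrow> coprime (G1 i) (G1 j)"
    and G2_coprime: "\<forall>i\<in>{1..L2}. \<forall>j\<in>{1..L2}. i \<noteq> j \<longrightarrow> coprime (G2 i) (G2 j)"
    and G1_G2_coprime: "\<forall>i\<in>{1..L1}. \<forall>j\<in>{1..L2}. coprime (G1 i) (G2 j)"
    and G1_1: "G1 1 = Gdot * M'"
    and Ms_G1: "\<forall>i\<in>{1..L1}. Ms i = M * G1 i"
    and Ms_G2: "\<forall>i\<in>{1..L2}. Ms (L1 + i) = M * M' * G2 i"
begin

definition cofactor :: "nat \<Rightarrow> int" where
  "cofactor i = (if i \<le> L1 then G1 i else G2 (i - L1))"

definition block_gcd :: "nat \<Rightarrow> int" where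
  "block_gcd i = (if i \<le> L1 then M else M * M')"

lemma block_index_cases:
  assumes "i \<in> {1..L1 + L2}"
  obtains "i \<in> {1..L1}" | j where "j \<in> {1..L2}" "i = L1 + j"
proof (cases "i \<le> L1")
  case False
  then show ?thesis
    using assms that(2)[of "i - L1"] by auto
qed (use assms that(1) in auto)

lemma Ms_factor: "i \<in> {1..L1 + L2} \<Longrightarrow> Ms i = block_gcd i * cofactor i"
  by (elim block_index_cases) (use Ms_G1 Ms_G2 in \<open>auto simp: block_gcd_def cofactor_def\<close>)

lemma cofactor_pos: "i \<in> {1..L1 + L2} \<Longrightarrow> cofactor i > 0"
  by (elim block_index_cases) (use G1_pos G2_pos in \<open>auto simp: cofactor_def\<close>)

lemma Ms_pos: "i \<in> {1..L1 + L2} \<Longrightarrow> Ms i > 0"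
  using Ms_factor cofactor_pos M_pos M'_pos unfolding block_gcd_def by simp

lemma gcd_Ms_1:
  assumes "i \<in> {2..L1 + L2}"
  shows "gcd (Ms 1) (Ms i) = block_gcd i"
proof -
  from assms have "i \<in> {1..L1 + L2}"
    by auto
  then show ?thesis
  proof (cases rule: block_index_cases)
    case 1
    then have "coprime (G1 1) (G1 i)"
      using G1_coprime L1_pos assms by auto
    then have "gcd (M * G1 1) (M * G1 i) = M"
      using M_pos by (simp flip: gcd_mult_distrib_int)
    then show ?thesis
      using 1 Ms_G1 L1_pos unfolding block_gcd_def by auto
  next
    case (2 j)
    then have "coprime (Gdot * M') (G2 j)"
      using G1_G2_coprime G1_1 L1_pos by force
    then have "gcd (M * M' * Gdot) (M * M' * G2 j) = M * M'"
      using M_pos M'_pos by (simp flip: gcd_mult_distrib_int)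
    moreover have "Ms 1 = M * M' * Gdot"
      using Ms_G1 L1_pos G1_1 by auto
    ultimately show ?thesis
      using 2 Ms_G2 unfolding block_gcd_def by auto
  qed
qed

lemma Ms_div_gcd_Ms_1: "i \<in> {2..L1 + L2} \<Longrightarrow> Ms i div gcd (Ms 1) (Ms i) = cofactor i"
  using Ms_factor[of i] gcd_Ms_1[of i] M_pos M'_pos unfolding block_gcd_def by auto

lemma cofactor_coprime:
  assumes "i \<in> {1..L1 + L2}" "j \<in> {1..L1 + L2}" "i \<noteq> j"
  shows "coprime (cofactor i) (cofactor j)"
  using assms(1)
proof (cases rule: block_index_cases)
  case 1
  from assms(2) show ?thesis
  proof (cases rule: block_index_cases)
    case (2 j')
    then show ?thesis
      using 1 G1_G2_coprime unfolding cofactor_def by auto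
  qed (use 1 assms(3) G1_coprime in \<open>auto simp: cofactor_def\<close>)
next
  case (2 i')
  from assms(2) show ?thesis
  proof (cases rule: block_index_cases)
    case 1
    then show ?thesis
      using 2 G1_G2_coprime unfolding cofactor_def by (auto simp: coprime_commute)
  qed (use 2 assms(3) G2_coprime in \<open>auto simp: cofactor_def\<close>)
qed


lemma coprime_Ms_div_gcd_Ms_1:
  "\<forall>i\<in>{1..L1 + L2} - {1}. \<forall>j\<in>{1..L1 + L2} - {1}. i \<noteq> j \<longrightarrow>
     coprime (Ms i div gcd (Ms 1) (Ms i)) (Ms j div gcd (Ms 1) (Ms j))"
  using cofactor_coprime Ms_div_gcd_Ms_1 by auto

lemma error_budget:
  fixes \<tau> :: "nat \<Rightarrow> real"
  assumes "\<tau> 1 < real_of_int M / 4"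
    and "\<forall>i\<in>{2..L1}. \<tau> i \<le> real_of_int M / 4"
    and "\<forall>i\<in>{L1 + 1..L1 + L2}. \<tau> i \<le> real_of_int (M * M') / 2 - real_of_int M / 4"
    and "i \<in> {2..L1 + L2}"
  shows "\<tau> i + \<tau> 1 < real_of_int (gcd (Ms 1) (Ms i)) / 2"
proof (cases "i \<le> L1")
  case True
  then have "\<tau> i \<le> real_of_int M / 4"
    using assms(2,4) by auto
  then show ?thesis
    using True assms(1,4) gcd_Ms_1 unfolding block_gcd_def by simp
next
  case False
  then have "\<tau> i \<le> real_of_int (M * M') / 2 - real_of_int M / 4"
    using assms(3,4) by auto
  then show ?thesis
    using False assms(1,4) gcd_Ms_1 unfolding block_gcd_def by simp
qed
end

theorem corollary4:
  fixes M M' :: int and L1 L2 :: nat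
    and G1 G2 :: "nat \<Rightarrow> int" and Gdot :: int
    and Ms :: "nat \<Rightarrow> int" and N :: int
    and rt :: "nat \<Rightarrow> int" and tau :: "nat \<Rightarrow> real"
  assumes "M > 0" and "M' > 0" and "L1 \<ge> 2" and "L2 \<ge> 1"
    and "\<forall>i\<in>{1..L1}. G1 i > 0" and "\<forall>i\<in>{1..L2}. G2 i > 0"
    and "\<forall>i\<in>{1..L1}. \<forall>j\<in>{1..L1}. i \<noteq> j \<longrightarrow> coprime (G1 i) (G1 j)"
    and "\<forall>i\<in>{1..L2}. \<forall>j\<in>{1..L2}. i \<noteq> j \<longrightarrow> coprime (G2 i) (G2 j)"
    and "\<forall>i\<in>{1..L1}. \<forall>j\<in>{1..L2}. coprime (G1 i) (G2 j)"
    and "G1 1 = Gdot * M'"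
    and "\<forall>i\<in>{1..L1}. Ms i = M * G1 i"
    and "\<forall>i\<in>{1..L2}. Ms (L1 + i) = M * M' * G2 i"
    and "0 \<le> N" and "N < Lcm (Ms ` {1..L1 + L2})"
    and "\<forall>i\<in>{1..L1 + L2}. 0 \<le> rt i \<and> rt i \<le> Ms i - 1"
    and "\<forall>i\<in>{1..L1 + L2}. \<bar>real_of_int (rt i - N mod Ms i)\<bar> \<le> tau i"
    and "tau 1 < real_of_int M / 4"
    and "\<forall>i\<in>{2..L1}. tau i \<le> real_of_int M / 4"
    and "\<forall>i\<in>{L1 + 1..L1 + L2}. tau i \<le> real_of_int (M * M') / 2 - real_of_int M / 4"
  shows "\<exists>nh. single_stage (L1 + L2) Ms 1 rt = Some nh \<and>
           (\<forall>i\<in>{1..L1 + L2}. nh i = (N - N mod Ms i) div Ms i)"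
proof -
  interpret two_group_moduli M M' L1 L2 G1 G2 Gdot Ms
    using assms(1-12) by unfold_locales auto
  have err: "\<bar>real_of_int (rt i - N mod Ms i)\<bar> + \<bar>real_of_int (rt 1 - N mod Ms 1)\<bar>
      < real_of_int (gcd (Ms 1) (Ms i)) / 2" if "i \<in> {1..L1 + L2} - {1}" for i
  proof -
    have "\<bar>real_of_int (rt i - N mod Ms i)\<bar> + \<bar>real_of_int (rt 1 - N mod Ms 1)\<bar> \<le> tau i + tau 1"
      using assms(3,16) that by (intro add_mono) auto
    also have "\<dots> < real_of_int (gcd (Ms 1) (Ms i)) / 2"
      using error_budget[of tau i] assms(17-19) that by auto
    finally show ?thesis .
  qed
  obtain nh where "single_stage (L1 + L2) Ms 1 rt = Some nh" "\<forall>i\<in>{1..L1 + L2}. nh i = N div Ms i"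
    using single_stage_recovers_quotients[of 1 "L1 + L2" Ms N rt]
      Ms_pos coprime_Ms_div_gcd_Ms_1 err assms(3,13,14) by auto
  moreover have "N div Ms i = (N - N mod Ms i) div Ms i" for i
    by (simp add: minus_mod_eq_mult_div)
  ultimately show ?thesis
    by auto
qed

end
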